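(* Let $A\in\mathbb{R}^{n\times m}$ have distinct columns and suppose $\mathrm{New}(A)$ is full dimensional (has nonempty interior in $\mathbb{R}^n$), every column of $A$ is either an extreme point of $\mathrm{New}(A)$ or lies in its interior, and either (1) at most one column lies in the interior of $\mathrm{New}(A)$, or (2) $\mathrm{New}(A)$ has exactly $n+1$ extreme points and at most two columns lie in its interior. Then $C_{\mathrm{SAGE}}(A)=C_{\mathrm{NNS}}(A)$.
   Context: Let $A\in\mathbb{R}^{n\times m}$ have distinct columns $a_1,\dots,a_m$. For $c\in\mathbb{R}^m$, $\mathrm{Sig}(A,c)$ denotes $x\mapsto\sum_{i=1}^m c_i\exp(a_i^\top x)$. $\mathrm{New}(A)=\mathrm{conv}\{a_1,\dots,a_m\}$. $C_{\mathrm{NNS}}(A)=\{c\in\mathbb{R}^m:\mathrm{Sig}(A,c)(x)\ge 0\ \forall x\in\mathbb{R}^n\}$, $C_{\mathrm{AGE}}(A,k)=\{c\in C_{\mathrm{NNS}}(A): c_i\ge 0\ \forall i\ne k\}$, $C_{\mathrm{SAGE}}(A)=\sum_{k=1}^m C_{\mathrm{AGE}}(A,k)$. *)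

theory Defs
  imports "HOL-Analysis.Analysis"
begin

text \<open>The matrix A is given by its columns a i (i ranging over a finite index
type 'm), each a vector in real^'n. Coefficient vectors c are functions 'm => real.\<close>

definition Sig :: "('m::finite \<Rightarrow> real^'n) \<Rightarrow> ('m \<Rightarrow> real) \<Rightarrow> real^'n \<Rightarrow> real" where
  "Sig a c x = (\<Sum>i\<in>UNIV. c i * exp (a i \<bullet> x))"

definition New :: "('m::finite \<Rightarrow> real^'n) \<Rightarrow> (real^'n) set" where
  "New a = convex hull (range a)"

definition C_NNS :: "('m::finite \<Rightarrow> real^'n) \<Rightarrow> ('m \<Rightarrow> real) set" where
  "C_NNS a = {c. \<forall>x. Sig a c x \<ge> 0}"

definition C_AGE :: "('m::finite \<Rightarrow> real^'n) \<Rightarrow> 'm \<Rightarrow> ('m \<Rightarrow> real) set" where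
  "C_AGE a k = {c \<in> C_NNS a. \<forall>i. i \<noteq> k \<longrightarrow> c i \<ge> 0}"

definition C_SAGE :: "('m::finite \<Rightarrow> real^'n) \<Rightarrow> ('m \<Rightarrow> real) set" where
  "C_SAGE a = {c. \<exists>f. (\<forall>k. f k \<in> C_AGE a k) \<and> (\<forall>i. c i = (\<Sum>k\<in>UNIV. f k i))}"

end

theory Submission
  imports Defs "HOL-Real_Asymp.Real_Asymp"
begin

text \<open>Nonnegativity of a signomial forces nonnegative coefficients at the vertices of its
  Newton polytope, so negative coefficients only occur at interior exponents. With at most
  one of them the coefficient vector is itself AGE. Otherwise the polytope is a simplex whose
  interior carries exactly the negative terms, and these force positive vertex coefficients.
  Writing the signomial as \<open>P - N\<close> with \<open>P\<close> the vertex part, take the least \<open>t\<close> with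
  \<open>t P - N \<ge> 0\<close>; then \<open>t \<le> 1\<close> and \<open>t P - N\<close> vanishes at some point \<open>xs\<close>. The first-order conditions at \<open>xs\<close> and the
  uniqueness of barycentric coordinates decompose \<open>t P - N\<close> into AM-GM certificates, one
  per negative term, and \<open>(1 - t) P\<close> is nonnegative.\<close>

lemma sum_UNIV_Compl_split:
  fixes f :: "'a::finite \<Rightarrow> 'b::comm_monoid_add"
  shows "sum f UNIV = sum f E + sum f (- E)"
  using sum.subset_diff[of E UNIV f] by (simp add: Compl_eq_Diff_UNIV add.commute)

lemma convex_hull_finite_imageE:
  fixes a :: "'i \<Rightarrow> 'v::real_vector"
  assumes "finite E" "inj_on a E" "y \<in> convex hull (a ` E)"
  obtains u where "\<forall>j\<in>E. 0 \<le> u j" "sum u E = 1" "(\<Sum>j\<in>E. u j *\<^sub>R a j) = y"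
proof -
  obtain U where U: "\<forall>x\<in>a ` E. 0 \<le> U x" "sum U (a ` E) = 1" "(\<Sum>x\<in>a ` E. U x *\<^sub>R x) = y"
    using assms(1,3) by (auto simp: convex_hull_finite)
  show ?thesis
  proof
    show "\<forall>j\<in>E. 0 \<le> (U \<circ> a) j" using U(1) by simp
    show "sum (U \<circ> a) E = 1" using U(2) by (simp add: sum.reindex[OF assms(2)])
    show "(\<Sum>j\<in>E. (U \<circ> a) j *\<^sub>R a j) = y" using U(3) by (simp add: sum.reindex[OF assms(2)])
  qed
qed

lemma affine_independent_coefficients_unique:
  fixes a :: "'i \<Rightarrow> 'v::real_vector"
  assumes "finite E" "inj_on a E" "\<not> affine_dependent (a ` E)"
    and "sum u E = sum v E" "(\<Sum>j\<in>E. u j *\<^sub>R a j) = (\<Sum>j\<in>E. v j *\<^sub>R a j)"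
    and "j \<in> E"
  shows "u j = v j"
proof (rule ccontr)
  assume "u j \<noteq> v j"
  define U where "U x = u (inv_into E a x) - v (inv_into E a x)" for x
  have U_a: "U (a i) = u i - v i" if "i \<in> E" for i
    using inv_into_f_f[OF assms(2) that] by (simp add: U_def)
  have "sum U (a ` E) = 0"
    using assms(4) by (simp add: sum.reindex[OF assms(2)] U_a sum_subtractf)
  moreover have "(\<Sum>x\<in>a ` E. U x *\<^sub>R x) = 0"
    using assms(5) by (simp add: sum.reindex[OF assms(2)] U_a scaleR_diff_left sum_subtractf)
  moreover have "\<exists>x\<in>a ` E. U x \<noteq> 0"
    using \<open>u j \<noteq> v j\<close> assms(6) U_a by auto
  ultimately show False
    using assms(1,3) affine_dependent_explicit_finite[of "a ` E"] by blast
qed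

lemma convex_hull_inner_le_point:
  fixes z :: "'v::real_inner"
  assumes "z \<in> convex hull S"
  shows "\<exists>s\<in>S. z \<bullet> x \<le> s \<bullet> x"
proof (rule ccontr)
  assume "\<not> ?thesis"
  then have "S \<subseteq> {w. x \<bullet> w < z \<bullet> x}" by (auto simp: inner_commute not_le)
  then have "convex hull S \<subseteq> {w. x \<bullet> w < z \<bullet> x}"
    by (rule hull_minimal) (rule convex_halfspace_lt)
  then show False using assms by (auto simp: inner_commute)
qed

lemma interior_convex_hull_inner_margin:
  fixes b :: "'v::euclidean_space"
  assumes "b \<in> interior (convex hull S)"
  obtains e where "e > 0" "\<And>x. \<exists>s\<in>S. b \<bullet> x + e * norm x \<le> s \<bullet> x"
proof -
  obtain e where e: "e > 0" "cball b e \<subseteq> convex hull S"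
    using assms mem_interior_cball by blast
  have "\<exists>s\<in>S. b \<bullet> x + e * norm x \<le> s \<bullet> x" for x
  proof -
    define z where "z = b + (e / norm x) *\<^sub>R x"
    have "z \<in> convex hull S"
      using e by (cases "x = 0") (auto simp: z_def dist_norm)
    then obtain s where "s \<in> S" "z \<bullet> x \<le> s \<bullet> x"
      using convex_hull_inner_le_point by blast
    moreover have "z \<bullet> x = b \<bullet> x + e * norm x"
      by (cases "x = 0") (simp_all add: z_def inner_add_left dot_square_norm power2_eq_square)
    ultimately show ?thesis by auto
  qed
  with e(1) show ?thesis using that by blast
qed

lemma continuous_attains_sup_vanishing_at_infinity:
  fixes h :: "'v::euclidean_space \<Rightarrow> real"
  assumes "continuous_on UNIV h" "(h \<longlongrightarrow> 0) at_infinity" "0 < h x0"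
  obtains z where "\<And>y. h y \<le> h z"
proof -
  obtain R0 where R0: "\<And>y. R0 \<le> norm y \<Longrightarrow> h y < h x0"
    using order_tendstoD(2)[OF assms(2,3)] by (auto simp: eventually_at_infinity)
  define R where "R = max R0 (norm x0)"
  have "cball 0 R \<noteq> {}" by (simp add: R_def)
  then obtain z where z: "z \<in> cball 0 R" "\<And>y. y \<in> cball 0 R \<Longrightarrow> h y \<le> h z"
    using continuous_attains_sup[OF compact_cball _ continuous_on_subset[OF assms(1)]] by blast
  have "h y \<le> h z" for y
  proof (cases "norm y \<le> R")
    case False
    then have "h y < h x0" using R0 by (simp add: R_def)
    also have "h x0 \<le> h z" using z(2) by (simp add: R_def)
    finally show ?thesis by simp
  qed (use z in auto)
  then show ?thesis using that by blast
qed

lemma affine_independent_extreme_points: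
  fixes S :: "'a::euclidean_space set"
  assumes "compact S" "convex S" "interior S \<noteq> {}"
    and card: "card {x. x extreme_point_of S} = DIM('a) + 1"
  shows "\<not> affine_dependent {x. x extreme_point_of S}"
proof -
  have "finite {x. x extreme_point_of S}" using card by (intro card_ge_0_finite) simp
  moreover have "S = convex hull {x. x extreme_point_of S}"
    using assms(1,2) by (rule Krein_Milman_Minkowski)
  then have "aff_dim {x. x extreme_point_of S} = DIM('a)"
    using aff_dim_nonempty_interior[OF assms(3)] by (metis aff_dim_convex_hull)
  ultimately show ?thesis
    using card by (simp add: affine_independent_iff_card)
qed

lemma Sig_add: "Sig a (\<lambda>i. c i + d i) x = Sig a c x + Sig a d x"
  by (simp add: Sig_def distrib_right sum.distrib)

lemma C_AGE_add:
  assumes "c \<in> C_AGE a k" "d \<in> C_AGE a k"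
  shows "(\<lambda>i. c i + d i) \<in> C_AGE a k"
  using assms by (auto simp: C_AGE_def C_NNS_def Sig_add add_nonneg_nonneg)

lemma nonneg_in_C_AGE:
  assumes "\<And>i. 0 \<le> c i"
  shows "c \<in> C_AGE a k"
  using assms by (auto simp: C_AGE_def C_NNS_def Sig_def intro!: sum_nonneg)

lemma C_AGE_subset_C_SAGE: "C_AGE a k \<subseteq> C_SAGE a"
proof
  fix c assume c: "c \<in> C_AGE a k"
  have "(\<lambda>i. if j = k then c i else 0) \<in> C_AGE a j" for j
    using c by (cases "j = k") (simp_all add: nonneg_in_C_AGE)
  then show "c \<in> C_SAGE a"
    unfolding C_SAGE_def by (intro CollectI exI[of _ "\<lambda>j i. if j = k then c i else 0"]) auto
qed

lemma nonneg_in_C_SAGE: "(\<And>i. 0 \<le> c i) \<Longrightarrow> c \<in> C_SAGE a"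
  using nonneg_in_C_AGE C_AGE_subset_C_SAGE by blast

lemma C_SAGE_add:
  assumes "c \<in> C_SAGE a" "d \<in> C_SAGE a"
  shows "(\<lambda>i. c i + d i) \<in> C_SAGE a"
proof -
  obtain f g where f: "\<forall>k. f k \<in> C_AGE a k" "\<forall>i. c i = (\<Sum>k\<in>UNIV. f k i)"
    and g: "\<forall>k. g k \<in> C_AGE a k" "\<forall>i. d i = (\<Sum>k\<in>UNIV. g k i)"
    using assms unfolding C_SAGE_def by blast
  have "\<forall>k. (\<lambda>i. f k i + g k i) \<in> C_AGE a k" using f(1) g(1) by (simp add: C_AGE_add)
  moreover have "\<forall>i. c i + d i = (\<Sum>k\<in>UNIV. f k i + g k i)" using f(2) g(2) by (simp add: sum.distrib)
  ultimately show ?thesis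
    unfolding C_SAGE_def by (intro CollectI exI[of _ "\<lambda>k i. f k i + g k i"]) simp
qed

lemma C_SAGE_sum:
  assumes "finite F" "\<And>k. k \<in> F \<Longrightarrow> g k \<in> C_SAGE a"
  shows "(\<lambda>i. \<Sum>k\<in>F. g k i) \<in> C_SAGE a"
  using assms by (induction F rule: finite_induct) (auto intro: nonneg_in_C_SAGE C_SAGE_add)

lemma C_SAGE_subset_C_NNS: "C_SAGE a \<subseteq> C_NNS a"
proof
  fix c assume "c \<in> C_SAGE a"
  then obtain f where f: "\<forall>k. f k \<in> C_AGE a k" "\<forall>i. c i = (\<Sum>k\<in>UNIV. f k i)"
    unfolding C_SAGE_def by blast
  have "Sig a c x = (\<Sum>k\<in>UNIV. Sig a (f k) x)" for x
  proof -
    have "Sig a c x = (\<Sum>i\<in>UNIV. \<Sum>k\<in>UNIV. f k i * exp (a i \<bullet> x))"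
      by (simp add: Sig_def f(2) sum_distrib_right)
    also have "\<dots> = (\<Sum>k\<in>UNIV. \<Sum>i\<in>UNIV. f k i * exp (a i \<bullet> x))"
      by (rule sum.swap)
    finally show ?thesis unfolding Sig_def .
  qed
  then show "c \<in> C_NNS a"
    using f(1) by (auto simp: C_NNS_def C_AGE_def intro!: sum_nonneg)
qed

text \<open>Along the ray \<open>x = n y\<close>, after rescaling by \<open>exp (- n s)\<close>, the terms with
  \<open>a i \<bullet> y < s\<close> vanish in the limit and those with \<open>a i \<bullet> y > s\<close> only decrease the value.\<close>
lemma C_NNS_face_sum_nonneg:
  assumes "c \<in> C_NNS a" and "\<And>i. a i \<bullet> y > s \<Longrightarrow> c i \<le> 0"
  shows "0 \<le> (\<Sum>i\<in>{i. a i \<bullet> y = s}. c i)"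
proof -
  define g where "g n = (\<Sum>i\<in>UNIV. if a i \<bullet> y \<le> s then c i * exp (a i \<bullet> y - s) ^ n else 0)"
    for n
  have "0 \<le> g n" for n
  proof -
    have "0 \<le> Sig a c (real n *\<^sub>R y) * exp (- (real n * s))"
      using assms(1) by (simp add: C_NNS_def)
    also have "\<dots> = (\<Sum>i\<in>UNIV. c i * exp (a i \<bullet> y - s) ^ n)"
      unfolding Sig_def sum_distrib_right
      by (intro sum.cong refl) (simp add: exp_of_nat_mult[symmetric] mult.assoc exp_add[symmetric] right_diff_distrib)
    also have "\<dots> \<le> g n"
      unfolding g_def using assms(2) by (intro sum_mono) (auto simp: mult_nonpos_nonneg not_le)
    finally show ?thesis .
  qed
  moreover have "g \<longlonglongrightarrow> (\<Sum>i\<in>UNIV. if a i \<bullet> y = s then c i else 0)"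
    unfolding g_def
  proof (intro tendsto_sum)
    fix i
    show "(\<lambda>n. if a i \<bullet> y \<le> s then c i * exp (a i \<bullet> y - s) ^ n else 0)
            \<longlonglongrightarrow> (if a i \<bullet> y = s then c i else 0)"
      by (cases "a i \<bullet> y < s")
        (auto intro!: tendsto_mult_right_zero LIMSEQ_power_zero)
  qed
  ultimately have "0 \<le> (\<Sum>i\<in>UNIV. if a i \<bullet> y = s then c i else 0)"
    by (simp add: LIMSEQ_le_const)
  then show ?thesis by (simp add: sum.If_cases)
qed

lemma C_NNS_extreme_point_nonneg:
  assumes "inj a" and "c \<in> C_NNS a" and "a k extreme_point_of New a"
  shows "0 \<le> c k"
proof -
  have "polyhedron (New a)" unfolding New_def by (rule polyhedron_convex_hull) simp
  then have "{a k} exposed_face_of New a"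
    using assms(3) face_of_singleton exposed_face_of_polyhedron by blast
  then obtain u b where sub: "New a \<subseteq> {x. u \<bullet> x \<le> b}" and eq: "{a k} = New a \<inter> {x. u \<bullet> x = b}"
    unfolding exposed_face_of_def by blast
  have mem: "a i \<in> New a" for i unfolding New_def by (simp add: hull_inc)
  have "a i \<bullet> u = b \<longleftrightarrow> i = k" for i
  proof
    assume "a i \<bullet> u = b"
    then have "a i \<in> {a k}" using eq mem by (auto simp: inner_commute)
    then show "i = k" using assms(1) by (auto dest: injD)
  qed (use eq in \<open>auto simp: inner_commute\<close>)
  then have "{i. a i \<bullet> u = b} = {k}" by auto
  moreover have "a i \<bullet> u \<le> b" for i using subsetD[OF sub mem[of i]] by (simp add: inner_commute)
  ultimately show ?thesis
    using C_NNS_face_sum_nonneg[OF assms(2), where y = u and s = b] by (simp add: not_less[symmetric])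
qed

lemma Sig_gradient_eq_0_at_min:
  assumes "\<And>x. Sig a c xs \<le> Sig a c x"
  shows "(\<Sum>i\<in>UNIV. (c i * exp (a i \<bullet> xs)) *\<^sub>R a i) = 0"
proof -
  have "(\<Sum>i\<in>UNIV. (c i * exp (a i \<bullet> xs)) *\<^sub>R a i) \<bullet> y = 0" for y
  proof -
    define \<phi> where "\<phi> s = Sig a c (xs + s *\<^sub>R y)" for s
    have "(\<phi> has_real_derivative (\<Sum>i\<in>UNIV. c i * exp (a i \<bullet> xs) * (a i \<bullet> y))) (at 0)"
      unfolding \<phi>_def Sig_def inner_add_right inner_scaleR_right
      by (auto intro!: derivative_eq_intros sum.cong simp: mult_ac)
    moreover have "\<forall>s. \<bar>0 - s\<bar> < 1 \<longrightarrow> \<phi> 0 \<le> \<phi> s" using assms by (simp add: \<phi>_def)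
    ultimately have "(\<Sum>i\<in>UNIV. c i * exp (a i \<bullet> xs) * (a i \<bullet> y)) = 0"
      by (intro DERIV_local_min) auto
    moreover have "(\<Sum>i\<in>UNIV. (c i * exp (a i \<bullet> xs)) *\<^sub>R a i) \<bullet> y
        = (\<Sum>i\<in>UNIV. c i * exp (a i \<bullet> xs) * (a i \<bullet> y))"
      by (simp add: inner_sum_left)
    ultimately show ?thesis by simp
  qed
  then show ?thesis by (metis inner_eq_zero_iff)
qed

text \<open>Weighted AM-GM, i.e.\ Jensen's inequality for \<open>exp\<close>.\<close>
lemma barycentric_in_C_AGE:
  assumes "p \<notin> E" and "\<forall>j\<in>E. 0 \<le> l j" and "sum l E = 1"
    and "(\<Sum>j\<in>E. l j *\<^sub>R a j) = a p" and "0 \<le> K"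
  shows "(\<lambda>i. if i \<in> E then K * l i * exp (- (a i \<bullet> x0))
              else if i = p then - K * exp (- (a p \<bullet> x0)) else 0) \<in> C_AGE a p"
    (is "?g \<in> _")
proof -
  have "0 \<le> Sig a ?g x" for x
  proof (cases "E = {}")
    case False
    have "exp (\<Sum>j\<in>E. l j *\<^sub>R (a j \<bullet> (x - x0))) \<le> (\<Sum>j\<in>E. l j * exp (a j \<bullet> (x - x0)))"
      using assms(2,3) False by (intro convex_on_sum[OF _ _ exp_convex]) auto
    moreover have "(\<Sum>j\<in>E. l j *\<^sub>R (a j \<bullet> (x - x0))) = a p \<bullet> (x - x0)"
      unfolding assms(4)[symmetric] by (simp add: inner_sum_left)
    ultimately have "K * exp (a p \<bullet> (x - x0)) \<le> K * (\<Sum>j\<in>E. l j * exp (a j \<bullet> (x - x0)))"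
      using assms(5) by (simp add: mult_left_mono)
    moreover have "Sig a ?g x = K * (\<Sum>j\<in>E. l j * exp (a j \<bullet> (x - x0))) - K * exp (a p \<bullet> (x - x0))"
    proof -
      have "(\<Sum>i\<in>E. ?g i * exp (a i \<bullet> x)) = K * (\<Sum>j\<in>E. l j * exp (a j \<bullet> (x - x0)))"
        unfolding sum_distrib_left
        by (intro sum.cong refl) (simp add: inner_diff_right exp_diff exp_minus field_simps)
      moreover have "(\<Sum>i\<in>-E. ?g i * exp (a i \<bullet> x))
          = (\<Sum>i\<in>-E. if i = p then - K * exp (- (a p \<bullet> x0)) * exp (a p \<bullet> x) else 0)"
        by (intro sum.cong) auto
      ultimately show ?thesis
        unfolding Sig_def sum_UNIV_Compl_split[of _ E] using assms(1)
        by (simp add: inner_diff_right exp_diff exp_minus field_simps)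
    qed
    ultimately show ?thesis by simp
  qed (use assms(3) in simp)
  then show ?thesis
    using assms(1,2,5) by (auto simp: C_AGE_def C_NNS_def)
qed

lemma interior_exp_ratio_tendsto_0:
  fixes a :: "'i \<Rightarrow> 'v::euclidean_space"
  assumes "finite E" and "\<forall>j\<in>E. 0 < c j" and "b \<in> interior (convex hull (a ` E))"
  shows "((\<lambda>x. exp (b \<bullet> x) / (\<Sum>j\<in>E. c j * exp (a j \<bullet> x))) \<longlongrightarrow> 0) at_infinity"
proof -
  obtain e where e: "e > 0" "\<And>x. \<exists>s\<in>a ` E. b \<bullet> x + e * norm x \<le> s \<bullet> x"
    using interior_convex_hull_inner_margin[OF assms(3)] by blast
  have "E \<noteq> {}" using assms(3) by auto
  define m where "m = Min (c ` E)"
  have m: "0 < m" "\<And>j. j \<in> E \<Longrightarrow> m \<le> c j"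
    using assms(1,2) \<open>E \<noteq> {}\<close> by (auto simp: m_def)
  have "norm (exp (b \<bullet> x) / (\<Sum>j\<in>E. c j * exp (a j \<bullet> x))) \<le> exp (- (e * norm x)) / m" for x
  proof -
    obtain j where j: "j \<in> E" "b \<bullet> x + e * norm x \<le> a j \<bullet> x" using e(2) by blast
    have "m * exp (b \<bullet> x + e * norm x) \<le> c j * exp (a j \<bullet> x)"
      using j m(2)[OF j(1)] assms(2) by (intro mult_mono) auto
    also have "\<dots> \<le> (\<Sum>j\<in>E. c j * exp (a j \<bullet> x))"
      using assms(1,2) j(1) by (intro member_le_sum) (auto intro: less_imp_le)
    finally have "m * exp (b \<bullet> x) \<le> exp (- (e * norm x)) * (\<Sum>j\<in>E. c j * exp (a j \<bullet> x))"
      by (simp add: exp_add exp_minus field_simps)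
    moreover have "0 < (\<Sum>j\<in>E. c j * exp (a j \<bullet> x))"
      using assms(1,2) \<open>E \<noteq> {}\<close> by (intro sum_pos) auto
    ultimately show ?thesis using m(1) by (simp add: field_simps)
  qed
  moreover have "((\<lambda>r. exp (- (e * r)) / m) \<longlongrightarrow> 0) at_top"
    using e(1) by (intro tendsto_divide_zero) real_asymp
  ultimately show ?thesis
    by (intro Lim_null_comparison[OF _ filterlim_compose[OF _ filterlim_norm_at_top]]) auto
qed

text \<open>If some vertex coefficient were nonpositive, the opposite facet would separate
  \<open>a p\<close> from the other exponents with nonpositive coefficient; along the separating
  direction the negative term \<open>c p\<close> would then dominate.\<close>
lemma C_NNS_pos_at_simplex_vertex:
  assumes "c \<in> C_NNS a" and "inj_on a E" and "\<not> affine_dependent (a ` E)"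
    and "p \<notin> E" "c p < 0" "a p \<in> interior (convex hull (a ` E))"
    and "\<And>i. i \<notin> E \<Longrightarrow> c i \<le> 0" and "j \<in> E"
  shows "0 < c j"
proof (rule ccontr)
  assume "\<not> 0 < c j"
  define J where "J = E - {j}"
  have aJ: "a ` J = a ` E - {a j}"
    using assms(2,8) by (auto simp: J_def inj_on_def)
  have "a j \<notin> convex hull (a ` J)"
    using assms(3,8) aJ convex_hull_subset_affine_hull by (fastforce simp: affine_dependent_def)
  moreover have "a j \<in> convex hull (a ` E)"
    using assms(8) by (simp add: hull_inc)
  ultimately have "convex hull (a ` J) \<noteq> convex hull (a ` E)"
    by blast
  moreover have "convex hull (a ` J) face_of convex hull (a ` E)"
    unfolding face_of_convex_hull_affine_independent[OF assms(3)]
    by (intro exI[of _ "a ` J"]) (auto simp: J_def)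
  ultimately have "a p \<notin> convex hull (a ` J)"
    using face_of_disjoint_interior assms(6) by blast
  moreover have "closed (convex hull (a ` J))"
    by (simp add: compact_imp_closed compact_convex_hull finite_imp_compact)
  ultimately obtain w \<beta> where w: "w \<bullet> a p < \<beta>" "\<forall>x\<in>convex hull (a ` J). \<beta> < w \<bullet> x"
    using separating_hyperplane_closed_point[OF convex_convex_hull] by blast
  define y where "y = - w"
  have J_below: "a i \<bullet> y < a p \<bullet> y" if "i \<in> J" for i
    using w that hull_inc[of "a i" "a ` J"] by (fastforce simp: y_def inner_commute)
  have nonpos: "c i \<le> 0" if "i \<notin> J" for i
    using that assms(7) \<open>\<not> 0 < c j\<close> by (cases "i = j") (auto simp: J_def)
  have "c i \<le> 0" if "a i \<bullet> y > a p \<bullet> y" for i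
    using nonpos J_below that by force
  then have "0 \<le> (\<Sum>i\<in>{i. a i \<bullet> y = a p \<bullet> y}. c i)"
    by (rule C_NNS_face_sum_nonneg[OF assms(1)])
  also have "\<dots> = c p + (\<Sum>i\<in>{i. a i \<bullet> y = a p \<bullet> y} - {p}. c i)"
    by (rule sum.remove) auto
  also have "(\<Sum>i\<in>{i. a i \<bullet> y = a p \<bullet> y} - {p}. c i) \<le> 0"
    using nonpos J_below by (intro sum_nonpos) force
  finally show False using assms(5) by simp
qed

text \<open>Split \<open>Sig a c = P - N\<close> into the vertex part and the negative interior part;
  \<open>t\<close> is the maximum of \<open>N / P\<close>, which is attained because the ratio vanishes at infinity.\<close>
lemma C_NNS_simplex_rescaling_touches_0:
  assumes c: "c \<in> C_NNS a" and pos: "\<forall>j\<in>E. 0 < c j"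
    and outside: "\<And>i. i \<notin> E \<Longrightarrow> c i < 0 \<and> a i \<in> interior (convex hull (a ` E))"
    and "E \<noteq> UNIV"
  obtains t xs where "t \<le> 1"
    "(\<lambda>i. if i \<in> E then t * c i else c i) \<in> C_NNS a"
    "Sig a (\<lambda>i. if i \<in> E then t * c i else c i) xs = 0"
proof -
  define P where "P x = (\<Sum>j\<in>E. c j * exp (a j \<bullet> x))" for x
  define N where "N x = (\<Sum>i\<in>-E. - c i * exp (a i \<bullet> x))" for x
  have Sig_scaled: "Sig a (\<lambda>i. if i \<in> E then t * c i else c i) x = t * P x - N x" for t x
    unfolding Sig_def sum_UNIV_Compl_split[of _ E] P_def N_def
    by (simp add: sum_distrib_left sum_negf mult.assoc)
  obtain p where p: "p \<notin> E" using \<open>E \<noteq> UNIV\<close> by blast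
  then have "E \<noteq> {}" using outside by fastforce
  then have P_pos: "0 < P x" for x
    unfolding P_def using pos by (intro sum_pos) auto
  have N_pos: "0 < N x" for x
    unfolding N_def using outside p by (intro sum_pos) (auto simp: mult_neg_pos)
  define h where "h x = N x / P x" for x
  have "continuous_on UNIV h"
    unfolding h_def P_def N_def using P_pos[unfolded P_def]
    by (intro continuous_intros) (metis less_irrefl)
  moreover have "(h \<longlongrightarrow> 0) at_infinity"
  proof -
    have "h = (\<lambda>x. \<Sum>i\<in>-E. - c i * (exp (a i \<bullet> x) / P x))"
      by (simp add: fun_eq_iff h_def N_def sum_divide_distrib)
    moreover have "((\<lambda>x. \<Sum>i\<in>-E. - c i * (exp (a i \<bullet> x) / P x)) \<longlongrightarrow> 0) at_infinity"
      unfolding P_def using pos outside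
      by (intro tendsto_null_sum tendsto_mult_right_zero interior_exp_ratio_tendsto_0) auto
    ultimately show ?thesis by simp
  qed
  moreover have "0 < h 0" using N_pos P_pos by (simp add: h_def)
  ultimately obtain xs where xs: "\<And>y. h y \<le> h xs"
    using continuous_attains_sup_vanishing_at_infinity by blast
  show ?thesis
  proof
    have "0 \<le> Sig a c xs" using c by (simp add: C_NNS_def)
    moreover have "(\<lambda>i. if i \<in> E then 1 * c i else c i) = c" by auto
    then have "Sig a c xs = P xs - N xs" using Sig_scaled[of 1 xs] by simp
    ultimately have "N xs \<le> P xs" by simp
    then show "h xs \<le> 1" using P_pos by (simp add: h_def)
    have "N x \<le> h xs * P x" for x
      using xs[of x] P_pos[of x] by (simp add: h_def pos_divide_le_eq)
    then show "(\<lambda>i. if i \<in> E then h xs * c i else c i) \<in> C_NNS a"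
      by (simp add: C_NNS_def Sig_scaled)
    show "Sig a (\<lambda>i. if i \<in> E then h xs * c i else c i) xs = 0"
      using P_pos[of xs] by (simp add: Sig_scaled h_def)
  qed
qed

text \<open>At the zero \<open>xs\<close> the gradient of the rescaled signomial vanishes too. Since the
  barycentric coordinates on the simplex \<open>a ` E\<close> are unique, the vertex weights are then the
  sum of the barycentric weights of the negative terms, giving one AGE certificate per negative
  term; the remaining \<open>(1 - t)\<close>-part is nonnegative.\<close>
lemma C_SAGE_of_rescaling_touching_0:
  assumes inj: "inj_on a E" and ind: "\<not> affine_dependent (a ` E)"
    and outside: "\<And>i. i \<notin> E \<Longrightarrow> c i < 0 \<and> a i \<in> convex hull (a ` E)"
    and E_nonneg: "\<forall>j\<in>E. 0 \<le> c j" and "t \<le> 1"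
    and nns: "(\<lambda>i. if i \<in> E then t * c i else c i) \<in> C_NNS a"
    and zero: "Sig a (\<lambda>i. if i \<in> E then t * c i else c i) xs = 0"
  shows "c \<in> C_SAGE a"
proof -
  let ?ct = "\<lambda>i. if i \<in> E then t * c i else c i"
  define w where "w i = ?ct i * exp (a i \<bullet> xs)" for i
  define u where "u i = - w i" for i
  have "(\<Sum>i\<in>UNIV. w i *\<^sub>R a i) = 0"
    using Sig_gradient_eq_0_at_min[of a ?ct xs] nns zero by (simp add: C_NNS_def w_def)
  then have grad: "(\<Sum>j\<in>E. w j *\<^sub>R a j) = (\<Sum>i\<in>-E. u i *\<^sub>R a i)"
    unfolding sum_UNIV_Compl_split[of _ E] by (simp add: u_def sum_negf add_eq_0_iff)
  have "(\<Sum>i\<in>UNIV. w i) = 0"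
    using zero by (simp add: Sig_def w_def)
  then have total: "(\<Sum>j\<in>E. w j) = (\<Sum>i\<in>-E. u i)"
    unfolding sum_UNIV_Compl_split[of _ E] by (simp add: u_def sum_negf add_eq_0_iff)
  have "\<forall>i. \<exists>l. i \<notin> E \<longrightarrow> (\<forall>j\<in>E. 0 \<le> l j) \<and> sum l E = 1 \<and> (\<Sum>j\<in>E. l j *\<^sub>R a j) = a i"
    using convex_hull_finite_imageE[OF finite inj] outside by metis
  then obtain l where l: "\<And>i. i \<notin> E \<Longrightarrow> \<forall>j\<in>E. 0 \<le> l i j"
    "\<And>i. i \<notin> E \<Longrightarrow> sum (l i) E = 1" "\<And>i. i \<notin> E \<Longrightarrow> (\<Sum>j\<in>E. l i j *\<^sub>R a j) = a i"
    by metis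
  have u_nonneg: "0 \<le> u i" if "i \<notin> E" for i
    using outside[OF that] that by (simp add: u_def w_def mult_nonpos_nonneg)
  have w_E: "w j = (\<Sum>i\<in>-E. u i * l i j)" if "j \<in> E" for j
  proof (rule affine_independent_coefficients_unique[OF finite inj ind _ _ that])
    have "(\<Sum>j\<in>E. w j) = (\<Sum>i\<in>-E. u i * sum (l i) E)"
      using total l(2) by simp
    also have "\<dots> = (\<Sum>j\<in>E. \<Sum>i\<in>-E. u i * l i j)"
      unfolding sum_distrib_left by (rule sum.swap)
    finally show "sum w E = (\<Sum>j\<in>E. \<Sum>i\<in>-E. u i * l i j)" .
    have "(\<Sum>j\<in>E. w j *\<^sub>R a j) = (\<Sum>i\<in>-E. u i *\<^sub>R (\<Sum>j\<in>E. l i j *\<^sub>R a j))"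
      using grad l(3) by simp
    also have "\<dots> = (\<Sum>j\<in>E. \<Sum>i\<in>-E. (u i * l i j) *\<^sub>R a j)"
      unfolding scaleR_sum_right scaleR_scaleR by (rule sum.swap)
    finally show "(\<Sum>j\<in>E. w j *\<^sub>R a j) = (\<Sum>j\<in>E. (\<Sum>i\<in>-E. u i * l i j) *\<^sub>R a j)"
      by (simp add: scaleR_sum_left)
  qed
  define g where "g i j = (if j \<in> E then u i * l i j * exp (- (a j \<bullet> xs))
      else if j = i then - u i * exp (- (a i \<bullet> xs)) else 0)" for i j
  have "g i \<in> C_SAGE a" if "i \<notin> E" for i
    using barycentric_in_C_AGE[OF that l(1,2,3)[OF that] u_nonneg[OF that]] C_AGE_subset_C_SAGE
    unfolding g_def by blast
  then have "(\<lambda>j. \<Sum>i\<in>-E. g i j) \<in> C_SAGE a"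
    by (intro C_SAGE_sum) auto
  moreover have "(\<lambda>j. if j \<in> E then (1 - t) * c j else 0) \<in> C_SAGE a"
    using E_nonneg \<open>t \<le> 1\<close> by (intro nonneg_in_C_SAGE) auto
  ultimately have "(\<lambda>j. (\<Sum>i\<in>-E. g i j) + (if j \<in> E then (1 - t) * c j else 0)) \<in> C_SAGE a"
    by (rule C_SAGE_add)
  moreover have "(\<Sum>i\<in>-E. g i j) + (if j \<in> E then (1 - t) * c j else 0) = c j" for j
  proof (cases "j \<in> E")
    case True
    then have "(\<Sum>i\<in>-E. g i j) = w j * exp (- (a j \<bullet> xs))"
      using w_E by (simp add: g_def sum_distrib_right)
    also have "\<dots> = t * c j"
      using True by (simp add: w_def exp_minus)
    finally show ?thesis using True by (simp add: algebra_simps)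
  next
    case False
    then have "(\<Sum>i\<in>-E. g i j) = - u j * exp (- (a j \<bullet> xs))"
      by (simp add: g_def sum.delta sum.delta')
    then show ?thesis using False by (simp add: u_def w_def exp_minus)
  qed
  ultimately show ?thesis by simp
qed

lemma C_NNS_in_C_SAGE_simplex:
  assumes c: "c \<in> C_NNS a" and inj: "inj_on a E" and ind: "\<not> affine_dependent (a ` E)"
    and outside: "\<And>i. i \<notin> E \<Longrightarrow> c i < 0 \<and> a i \<in> interior (convex hull (a ` E))"
    and "E \<noteq> UNIV"
  shows "c \<in> C_SAGE a"
proof -
  obtain p where p: "p \<notin> E" using \<open>E \<noteq> UNIV\<close> by blast
  have "\<And>i. i \<notin> E \<Longrightarrow> c i \<le> 0" using outside by (simp add: less_imp_le)
  then have pos: "\<forall>j\<in>E. 0 < c j"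
    using C_NNS_pos_at_simplex_vertex[OF c inj ind p] outside[OF p] by blast
  obtain t xs where t: "t \<le> 1" and nns: "(\<lambda>i. if i \<in> E then t * c i else c i) \<in> C_NNS a"
    and zero: "Sig a (\<lambda>i. if i \<in> E then t * c i else c i) xs = 0"
    using C_NNS_simplex_rescaling_touches_0[OF c pos outside \<open>E \<noteq> UNIV\<close>] by blast
  show ?thesis
  proof (rule C_SAGE_of_rescaling_touching_0[OF inj ind _ _ t nns zero])
    show "c i < 0 \<and> a i \<in> convex hull (a ` E)" if "i \<notin> E" for i
      using outside[OF that] interior_subset by blast
    show "\<forall>j\<in>E. 0 \<le> c j" using pos by (simp add: less_imp_le)
  qed
qed

lemma compact_New: "compact (New a)"
  unfolding New_def by (simp add: compact_convex_hull finite_imp_compact)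

lemma convex_New: "convex (New a)"
  unfolding New_def by simp

lemma extreme_points_New:
  "{x. x extreme_point_of New a} = a ` {i. a i extreme_point_of New a}"
proof (intro equalityI subsetI)
  fix x assume x: "x \<in> {x. x extreme_point_of New a}"
  then obtain i where "x = a i"
    using extreme_point_of_convex_hull[of x "range a"] unfolding New_def by auto
  with x show "x \<in> a ` {i. a i extreme_point_of New a}" by auto
qed auto

lemma C_NNS_in_C_SAGE_New_simplex:
  fixes a :: "'m::finite \<Rightarrow> real^'n"
  assumes "inj a" and "interior (New a) \<noteq> {}"
    and ext_or_int: "\<And>i. a i extreme_point_of New a \<or> a i \<in> interior (New a)"
    and card: "card {x. x extreme_point_of New a} = CARD('n) + 1"
    and c: "c \<in> C_NNS a" and neg: "\<And>i. a i \<in> interior (New a) \<Longrightarrow> c i < 0"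
    and p: "a p \<in> interior (New a)"
  shows "c \<in> C_SAGE a"
proof -
  define E where "E = {i. a i extreme_point_of New a}"
  have hull: "New a = convex hull (a ` E)"
    using Krein_Milman_Minkowski[OF compact_New convex_New]
    unfolding E_def by (simp only: extreme_points_New)
  have "\<not> affine_dependent (a ` E)"
    using affine_independent_extreme_points[OF compact_New convex_New assms(2)] card
    unfolding E_def extreme_points_New[symmetric] by simp
  then show ?thesis
  proof (rule C_NNS_in_C_SAGE_simplex[OF c inj_on_subset[OF assms(1) subset_UNIV]])
    show "c i < 0 \<and> a i \<in> interior (convex hull (a ` E))" if "i \<notin> E" for i
    proof -
      have "a i \<in> interior (New a)" using that ext_or_int[of i] by (auto simp: E_def)
      then show ?thesis using neg hull by simp
    qed
    show "E \<noteq> UNIV"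
      using p extreme_point_not_in_interior by (auto simp: E_def)
  qed
qed

theorem mainTheorem18:
  fixes a :: "'m::finite \<Rightarrow> real^'n"
  assumes distinct: "inj a"
    and full: "interior (New a) \<noteq> {}"
    and ext_or_int: "\<forall>i. a i extreme_point_of New a \<or> a i \<in> interior (New a)"
    and cases: "card {i. a i \<in> interior (New a)} \<le> 1 \<or>
               (card {x. x extreme_point_of New a} = CARD('n) + 1 \<and>
                card {i. a i \<in> interior (New a)} \<le> 2)"
  shows "C_SAGE a = C_NNS a"
proof
  show "C_SAGE a \<subseteq> C_NNS a" by (rule C_SAGE_subset_C_NNS)
  show "C_NNS a \<subseteq> C_SAGE a"
  proof
    fix c assume c: "c \<in> C_NNS a"
    define I where "I = {i. a i \<in> interior (New a)}"
    have neg_interior: "i \<in> I" if "c i < 0" for i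
      using C_NNS_extreme_point_nonneg[OF distinct c, of i] ext_or_int that by (auto simp: I_def)
    show "c \<in> C_SAGE a"
    proof (cases "\<exists>k. \<forall>i. i \<noteq> k \<longrightarrow> 0 \<le> c i")
      case True
      then show ?thesis using c C_AGE_subset_C_SAGE by (auto simp: C_AGE_def)
    next
      case False
      then obtain p q where pq: "p \<noteq> q" "c p < 0" "c q < 0" by (metis not_le)
      then have sub: "{p, q} \<subseteq> I" using neg_interior by blast
      then have "2 \<le> card I" using pq(1) card_mono[of I "{p, q}"] by simp
      then have card_ext: "card {x. x extreme_point_of New a} = CARD('n) + 1" and "card I \<le> 2"
        using cases unfolding I_def by auto
      then have "card {p, q} = card I" using \<open>2 \<le> card I\<close> pq(1) by simp
      then have "I = {p, q}" using card_subset_eq[OF _ sub] by simp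
      then have "c i < 0" if "a i \<in> interior (New a)" for i
        using that pq by (auto simp: I_def)
      moreover have "a p \<in> interior (New a)" using sub by (simp add: I_def)
      ultimately show ?thesis
        using C_NNS_in_C_SAGE_New_simplex[OF distinct full _ card_ext c] ext_or_int by blast
    qed
  qed
qed

end
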